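(* Let $w:\mathbb{R}\to(0,\infty)$ be a positive weighting function (depending on fixed parameters $\bm\theta$) such that $\int_{\mathbb{R}}k_s(y;x)w(y)\,\mathrm{d}y<\infty$ for all $x\in\mathbb{R}$ and $s>0$, where $k_s(\cdot;x)$ is the Gaussian density with mean $x$ and standard deviation $s$. Let $\sigma>0$. Define $$p_1(x\mid y,s,\bm\theta)=\frac{k_s(x;y)\,w(x)}{\int_{\mathbb{R}}k_s(z;y)\,w(z)\,\mathrm{d}z},\qquad p_2(x\mid y,\sigma,\bm\theta)=\int_{\mathbb{R}}p_1(x\mid z,\sigma,\bm\theta)\,p_1(z\mid y,\sigma,\bm\theta)\,\mathrm{d}z.$$ Then for all $x_1,x_2\in\mathbb{R}$, $$p_2(x_1\mid x_2,\sigma,\bm\theta)=p_1(x_1\mid x_2,\sqrt2\,\sigma,\bm\theta)\cdot v(x_1,x_2),$$ where $$v(x_1,x_2)=\frac{\int_{\mathbb{R}}k_{\sqrt2\sigma}(y;x_2)\,w(y)\,\mathrm{d}y}{\int_{\mathbb{R}}k_{\sigma}(y;x_2)\,w(y)\,\mathrm{d}y}\int_{\mathbb{R}}k_{\sigma/\sqrt2}\Bigl(z;\tfrac12(x_1+x_2)\Bigr)\frac{w(z)}{\int_{\mathbb{R}}k_\sigma(y;z)\,w(y)\,\mathrm{d}y}\,\mathrm{d}z.$$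
   Context: $p_1$ is the one-step transition density of a one-dimensional discrete-time spatially-explicit random walk (Gaussian kernel times weighting function, renormalized), and $p_2$ is its two-step transition density. Here $x_1$ is the location at time $t$ and $x_2$ the location at time $t-2\tau$. *)

theory Defs
  imports "HOL-Probability.Probability"
begin

definition gkern :: "real \<Rightarrow> real \<Rightarrow> real \<Rightarrow> real" where
  "gkern s y x = normal_density x s y"

definition p1 :: "(real \<Rightarrow> real) \<Rightarrow> real \<Rightarrow> real \<Rightarrow> real \<Rightarrow> real" where
  "p1 w x y s = gkern s x y * w x / (\<integral>z. gkern s z y * w z \<partial>lborel)"

definition p2 :: "(real \<Rightarrow> real) \<Rightarrow> real \<Rightarrow> real \<Rightarrow> real \<Rightarrow> real" where
  "p2 w x y \<sigma> = (\<integral>z. p1 w x z \<sigma> * p1 w z y \<sigma> \<partial>lborel)"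

definition vfac :: "(real \<Rightarrow> real) \<Rightarrow> real \<Rightarrow> real \<Rightarrow> real \<Rightarrow> real" where
  "vfac w \<sigma> x1 x2 =
     (\<integral>y. gkern (sqrt 2 * \<sigma>) y x2 * w y \<partial>lborel) / (\<integral>y. gkern \<sigma> y x2 * w y \<partial>lborel)
     * (\<integral>z. gkern (\<sigma> / sqrt 2) z ((x1 + x2) / 2) * (w z / (\<integral>y. gkern \<sigma> y z * w y \<partial>lborel)) \<partial>lborel)"

end

theory Submission
  imports Defs
begin

text \<open>
  The product of two Gaussian kernels of width \<sigma> sharing the middle point z factors as a
  Gaussian of width \<open>\<surd>2 \<sigma>\<close> in the end points times a Gaussian of width \<open>\<sigma>/\<surd>2\<close> in z centred
  at their midpoint (completing the square). Substituting this into the integrand of p2 pulls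
  the z-independent factor \<open>k\<^sub>\<surd>\<^sub>2\<^sub>\<sigma>(x\<^sub>1; x\<^sub>2) w(x\<^sub>1)\<close> out of the integral; what remains
  is v, once the normaliser of the one-step density at width \<open>\<surd>2 \<sigma>\<close> is known to be nonzero.
\<close>

lemma gkern_pos: "s > 0 \<Longrightarrow> gkern s y x > 0"
  by (simp add: gkern_def normal_density_pos)

lemma integral_pos:
  assumes "integrable M f" and "\<And>x. x \<in> space M \<Longrightarrow> f x > (0::real)"
    and "emeasure M (space M) \<noteq> 0"
  shows "integral\<^sup>L M f > 0"
proof -
  have "integral\<^sup>L M f \<noteq> 0"
  proof
    assume "integral\<^sup>L M f = 0"
    then have "AE x in M. f x = 0"
      using integral_nonneg_eq_0_iff_AE[OF assms(1)] assms(2) by (simp add: less_imp_le)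
    moreover have "AE x in M. f x \<noteq> 0"
      using assms(2) by (intro AE_I2) (metis less_irrefl)
    ultimately have "AE x in M. False"
      by (auto elim: AE_mp)
    then show False
      using assms(3) ae_filter_eq_bot_iff[of M] by (simp add: trivial_limit_def)
  qed
  moreover have "integral\<^sup>L M f \<ge> 0"
    using assms(2) by (simp add: less_imp_le)
  ultimately show ?thesis by simp
qed

lemma gkern_mult_gkern:
  assumes "s > 0"
  shows "gkern s a z * gkern s z b
       = gkern (sqrt 2 * s) a b * gkern (s / sqrt 2) z ((a + b) / 2)"
proof -
  have wide: "(sqrt 2 * s)\<^sup>2 = 2 * s\<^sup>2" and narrow: "(s / sqrt 2)\<^sup>2 = s\<^sup>2 / 2"
    by (simp_all add: power_mult_distrib power_divide)
  have exponent: "-(a - z)\<^sup>2 / (2 * s\<^sup>2) + -(z - b)\<^sup>2 / (2 * s\<^sup>2)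
      = -(a - b)\<^sup>2 / (2 * (2 * s\<^sup>2)) + -(z - (a + b) / 2)\<^sup>2 / (2 * (s\<^sup>2 / 2))"
    using assms by (simp add: divide_simps) (simp add: power2_eq_square algebra_simps)
  have normaliser: "sqrt (2 * pi * s\<^sup>2) * sqrt (2 * pi * s\<^sup>2)
      = sqrt (2 * pi * (2 * s\<^sup>2)) * sqrt (2 * pi * (s\<^sup>2 / 2))"
  proof -
    have "(2 * pi * s\<^sup>2) * (2 * pi * s\<^sup>2) = (2 * pi * (2 * s\<^sup>2)) * (2 * pi * (s\<^sup>2 / 2))"
      by simp
    then show ?thesis
      by (simp only: real_sqrt_mult[symmetric])
  qed
  have "gkern s a z * gkern s z b
      = exp (-(a - z)\<^sup>2 / (2 * s\<^sup>2) + -(z - b)\<^sup>2 / (2 * s\<^sup>2))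
        / (sqrt (2 * pi * s\<^sup>2) * sqrt (2 * pi * s\<^sup>2))"
    by (simp add: gkern_def normal_density_def flip: exp_add)
  also have "\<dots> = exp (-(a - b)\<^sup>2 / (2 * (2 * s\<^sup>2)) + -(z - (a + b) / 2)\<^sup>2 / (2 * (s\<^sup>2 / 2)))
        / (sqrt (2 * pi * (2 * s\<^sup>2)) * sqrt (2 * pi * (s\<^sup>2 / 2)))"
    by (simp only: exponent normaliser)
  also have "\<dots> = gkern (sqrt 2 * s) a b * gkern (s / sqrt 2) z ((a + b) / 2)"
    unfolding gkern_def normal_density_def wide narrow by (simp flip: exp_add)
  finally show ?thesis .
qed

theorem proposition1:
  fixes w :: "real \<Rightarrow> real" and \<sigma> :: real
  assumes w_pos: "\<And>x. w x > 0"
    and w_int: "\<And>x s. s > 0 \<Longrightarrow> integrable lborel (\<lambda>y. gkern s y x * w y)"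
    and sigma_pos: "\<sigma> > 0"
  shows "\<forall>x1 x2. p2 w x1 x2 \<sigma> = p1 w x1 x2 (sqrt 2 * \<sigma>) * vfac w \<sigma> x1 x2"
proof (intro allI)
  fix x1 x2
  define W where "W = (\<lambda>s x. \<integral>y. gkern s y x * w y \<partial>lborel)"
  define F where "F = (\<lambda>z. gkern (\<sigma> / sqrt 2) z ((x1 + x2) / 2) * (w z / W \<sigma> z))"
  have "W (sqrt 2 * \<sigma>) x2 > 0"
    unfolding W_def using sigma_pos w_pos
    by (intro integral_pos w_int) (simp_all add: gkern_pos)
  have "p2 w x1 x2 \<sigma> = (\<integral>z. gkern (sqrt 2 * \<sigma>) x1 x2 * w x1 / W \<sigma> x2 * F z \<partial>lborel)"
    unfolding p2_def
  proof (rule Bochner_Integration.integral_cong[OF refl])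
    fix z
    show "p1 w x1 z \<sigma> * p1 w z x2 \<sigma> = gkern (sqrt 2 * \<sigma>) x1 x2 * w x1 / W \<sigma> x2 * F z"
      using gkern_mult_gkern[OF sigma_pos, of x1 z x2]
      by (simp add: p1_def W_def F_def field_simps)
  qed
  also have "\<dots> = gkern (sqrt 2 * \<sigma>) x1 x2 * w x1 / W \<sigma> x2 * (\<integral>z. F z \<partial>lborel)"
    by simp
  also have "\<dots> = p1 w x1 x2 (sqrt 2 * \<sigma>) * vfac w \<sigma> x1 x2"
    using \<open>W (sqrt 2 * \<sigma>) x2 > 0\<close>
    by (simp add: p1_def vfac_def W_def F_def field_simps)
  finally show "p2 w x1 x2 \<sigma> = p1 w x1 x2 (sqrt 2 * \<sigma>) * vfac w \<sigma> x1 x2" .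
qed

end
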